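(* Let $X$ and $Y$ be finite $T_0$-spaces. If $X$ is homotopy equivalent to $Y$, then $\overline{\mathrm{rank}}(X)=\overline{\mathrm{rank}}(Y)$, where $\overline{\mathrm{rank}}(X):=|X|-\mathrm{rank}(X_M)$.
   Context: A finite $T_0$-space is identified with a finite poset via $x\le y$ iff $U_x\subseteq U_y$, where $U_x$ is the minimal open set containing $x$. For a labelling $X=\{x_1,\dots,x_n\}$, $X_M=(x_{i,j})$ is the $n\times n$ matrix with $x_{i,j}=0$ if $x_i\le x_j$ and $x_{i,j}=1$ otherwise; its rank (as a real matrix) does not depend on the labelling. *)

theory Defs
  imports "HOL-Analysis.Analysis" "Jordan_Normal_Form.DL_Rank"
begin

text \<open>Minimal open set U_x of a point x of a topological space (intersection of all
open sets containing x; for finite spaces this is itself open).\<close>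
definition minimal_open :: "'a topology \<Rightarrow> 'a \<Rightarrow> 'a set" where
  "minimal_open X x = \<Inter>{U. openin X U \<and> x \<in> U}"

definition fin_leq :: "'a topology \<Rightarrow> 'a \<Rightarrow> 'a \<Rightarrow> bool" where
  "fin_leq X x y \<longleftrightarrow> minimal_open X x \<subseteq> minimal_open X y"

definition finite_T0_space :: "'a topology \<Rightarrow> bool" where
  "finite_T0_space X \<longleftrightarrow> finite (topspace X) \<and> t0_space X"

text \<open>A fixed labelling x_1,...,x_n of the points of X (the rank does not depend on it).\<close>
definition labelling :: "'a topology \<Rightarrow> 'a list" where
  "labelling X = (SOME xs. distinct xs \<and> set xs = topspace X)"

definition space_matrix :: "'a topology \<Rightarrow> real mat" where
  "space_matrix X =
     (let xs = labelling X; n = length xs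
      in mat n n (\<lambda>(i, j). if fin_leq X (xs ! i) (xs ! j) then 0 else 1))"

definition rank_bar :: "'a topology \<Rightarrow> int" where
  "rank_bar X = int (card (topspace X)) - int (vec_space.rank (card (topspace X)) (space_matrix X))"

end

(*
  Since X_M = J - Z, where J is the all-ones matrix and Z the zeta matrix of the order (Z is
  triangular with respect to any linear extension, hence invertible), rank(X_M) >= |X| - 1. So
  rank_bar X is 1 if X_M is singular and 0 otherwise, and it remains to show that singularity of
  X_M is a homotopy invariant. Singularity is phrased without a labelling, as the existence of a
  nonzero kernel vector indexed by the points.

  If x is a down beat point, i.e. U_x - {x} has a maximum x', then the columns of x and x' in X_M
  agree outside the row of x; adding one to the other and expanding shows that removing x does
  not affect singularity. Up beat points are handled dually, via the transpose. By Stong's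
  theorem, homotopy equivalent finite T0-spaces have isomorphic cores (spaces obtained by
  removing beat points one at a time until none is left). In order-theoretic terms: homotopic
  maps are connected by a fence of pointwise comparable monotone maps, removing beat points
  yields a retraction connected to the identity by such a fence, and on a poset without beat
  points every map in the fence of the identity is the identity.
*)
theory Submission
  imports Defs
begin

definition poset_on :: "'a set \<Rightarrow> ('a \<Rightarrow> 'a \<Rightarrow> bool) \<Rightarrow> bool" where
  "poset_on S leq \<longleftrightarrow> reflp_on S leq \<and> antisymp_on S leq \<and> transp_on S leq"

lemma poset_on_refl: "poset_on S leq \<Longrightarrow> x \<in> S \<Longrightarrow> leq x x"
  unfolding poset_on_def by (meson reflp_onD)

lemma poset_on_antisym: "poset_on S leq \<Longrightarrow> x \<in> S \<Longrightarrow> y \<in> S \<Longrightarrow> leq x y \<Longrightarrow> leq y x \<Longrightarrow> x = y"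
  unfolding poset_on_def by (meson antisymp_onD)

lemma poset_on_trans:
  "poset_on S leq \<Longrightarrow> x \<in> S \<Longrightarrow> y \<in> S \<Longrightarrow> z \<in> S \<Longrightarrow> leq x y \<Longrightarrow> leq y z \<Longrightarrow> leq x z"
  unfolding poset_on_def by (meson transp_onD)

lemma poset_on_subset: "poset_on S leq \<Longrightarrow> T \<subseteq> S \<Longrightarrow> poset_on T leq"
  unfolding poset_on_def using reflp_on_subset antisymp_on_subset transp_on_subset by blast

lemma poset_on_conversep [simp]: "poset_on S leq\<inverse>\<inverse> \<longleftrightarrow> poset_on S leq"
  by (simp add: poset_on_def)

lemma poset_on_has_minimal:
  assumes "poset_on S leq" "finite A" "A \<subseteq> S" "A \<noteq> {}"
  shows "\<exists>m\<in>A. \<forall>b\<in>A. leq b m \<longrightarrow> b = m"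
proof -
  let ?less = "\<lambda>a b. leq a b \<and> a \<noteq> b"
  have "asymp_on A ?less"
  proof (rule asymp_onI)
    fix a b assume "a \<in> A" "b \<in> A" "?less a b"
    then show "\<not> ?less b a"
      using poset_on_antisym[OF assms(1)] assms(3) by blast
  qed
  moreover have "transp_on A ?less"
  proof (rule transp_onI)
    fix a b c assume "a \<in> A" "b \<in> A" "c \<in> A" "?less a b" "?less b c"
    then show "?less a c"
      using poset_on_antisym[OF assms(1)] poset_on_trans[OF assms(1)] assms(3) by blast
  qed
  ultimately show ?thesis
    using Finite_Set.bex_min_element[OF assms(2) _ _ assms(4)] by blast
qed

lemma poset_on_has_maximal:
  assumes "poset_on S leq" "finite A" "A \<subseteq> S" "A \<noteq> {}"
  shows "\<exists>m\<in>A. \<forall>b\<in>A. leq m b \<longrightarrow> b = m"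
  using poset_on_has_minimal[of S "leq\<inverse>\<inverse>"] assms by simp

definition singular_on :: "'a set \<Rightarrow> ('a \<Rightarrow> 'a \<Rightarrow> 'k::field) \<Rightarrow> bool" where
  "singular_on S F \<longleftrightarrow> (\<exists>v. (\<exists>b\<in>S. v b \<noteq> 0) \<and> (\<forall>a\<in>S. (\<Sum>b\<in>S. F a b * v b) = 0))"

lemma singular_on_bij:
  assumes p: "bij_betw p S T" and G: "\<And>a b. a \<in> S \<Longrightarrow> b \<in> S \<Longrightarrow> G (p a) (p b) = F a b"
  shows "singular_on T G \<longleftrightarrow> singular_on S F"
proof -
  have T: "T = p ` S"
    using p by (simp add: bij_betw_def)
  have sum: "(\<Sum>b\<in>T. G (p a) b * v b) = (\<Sum>b\<in>S. F a b * v (p b))" if "a \<in> S" for a v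
  proof -
    have "(\<Sum>b\<in>T. G (p a) b * v b) = (\<Sum>b\<in>S. G (p a) (p b) * v (p b))"
      by (rule sum.reindex_bij_betw[OF p, symmetric])
    also have "\<dots> = (\<Sum>b\<in>S. F a b * v (p b))"
      using G that by (intro sum.cong) simp_all
    finally show ?thesis .
  qed
  have "singular_on T G \<longleftrightarrow> (\<exists>v. (\<exists>b\<in>S. v (p b) \<noteq> 0) \<and> (\<forall>a\<in>S. (\<Sum>b\<in>S. F a b * v (p b)) = 0))"
    unfolding singular_on_def T using sum[unfolded T] by simp
  also have "\<dots> \<longleftrightarrow> singular_on S F"
  proof
    assume "singular_on S F"
    then obtain u where u: "\<exists>b\<in>S. u b \<noteq> 0" "\<forall>a\<in>S. (\<Sum>b\<in>S. F a b * u b) = 0"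
      unfolding singular_on_def by blast
    define v where "v = u \<circ> inv_into S p"
    have v: "v (p b) = u b" if "b \<in> S" for b
      using p that by (simp add: v_def bij_betw_inv_into_left)
    have "(\<Sum>b\<in>S. F a b * v (p b)) = (\<Sum>b\<in>S. F a b * u b)" for a
      using v by (intro sum.cong) simp_all
    moreover have "\<exists>b\<in>S. v (p b) \<noteq> 0"
      using u(1) v by metis
    ultimately show "\<exists>v. (\<exists>b\<in>S. v (p b) \<noteq> 0) \<and> (\<forall>a\<in>S. (\<Sum>b\<in>S. F a b * v (p b)) = 0)"
      using u(2) by (intro exI[of _ v]) simp
  next
    assume "\<exists>v. (\<exists>b\<in>S. v (p b) \<noteq> 0) \<and> (\<forall>a\<in>S. (\<Sum>b\<in>S. F a b * v (p b)) = 0)"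
    then obtain v where "\<exists>b\<in>S. v (p b) \<noteq> 0" "\<forall>a\<in>S. (\<Sum>b\<in>S. F a b * v (p b)) = 0"
      by blast
    then show "singular_on S F"
      unfolding singular_on_def by (intro exI[of _ "v \<circ> p"]) simp
  qed
  finally show ?thesis .
qed

lemma det_eq_0_iff_singular_on:
  assumes "A \<in> carrier_mat n n"
  shows "det A = 0 \<longleftrightarrow> singular_on {..<n} (\<lambda>i j. A $$ (i, j))"
proof -
  have mult: "vec_index (A *\<^sub>v v) i = (\<Sum>j<n. A $$ (i, j) * vec_index v j)"
    if "v \<in> carrier_vec n" "i < n" for v i
    using assms that by (simp add: scalar_prod_def atLeast0LessThan)
  have "(\<exists>v \<in> carrier_vec n. v \<noteq> 0\<^sub>v n \<and> A *\<^sub>v v = 0\<^sub>v n) \<longleftrightarrow> singular_on {..<n} (\<lambda>i j. A $$ (i, j))"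
  proof
    assume "\<exists>v \<in> carrier_vec n. v \<noteq> 0\<^sub>v n \<and> A *\<^sub>v v = 0\<^sub>v n"
    then obtain v where v: "v \<in> carrier_vec n" "v \<noteq> 0\<^sub>v n" "A *\<^sub>v v = 0\<^sub>v n"
      by blast
    have "\<exists>j<n. vec_index v j \<noteq> 0"
      using v(1,2) by (metis carrier_vecD eq_vecI index_zero_vec)
    moreover have "\<forall>i<n. (\<Sum>j<n. A $$ (i, j) * vec_index v j) = 0"
      using v(1,3) mult by (metis index_zero_vec(1))
    ultimately show "singular_on {..<n} (\<lambda>i j. A $$ (i, j))"
      unfolding singular_on_def by (intro exI[of _ "vec_index v"]) auto
  next
    assume "singular_on {..<n} (\<lambda>i j. A $$ (i, j))"
    then obtain f where f: "\<exists>j<n. f j \<noteq> 0" "\<forall>i<n. (\<Sum>j<n. A $$ (i, j) * f j) = 0"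
      unfolding singular_on_def by auto
    have "vec n f \<noteq> 0\<^sub>v n"
      using f(1) by (metis index_vec index_zero_vec(1))
    moreover have "A *\<^sub>v vec n f = 0\<^sub>v n"
      using f(2) mult[of "vec n f"] assms by (intro eq_vecI) auto
    ultimately show "\<exists>v \<in> carrier_vec n. v \<noteq> 0\<^sub>v n \<and> A *\<^sub>v v = 0\<^sub>v n"
      by (meson vec_carrier)
  qed
  then show ?thesis
    using det_0_iff_vec_prod_zero[OF assms] by blast
qed

definition mat_on_list :: "('a \<Rightarrow> 'a \<Rightarrow> 'k) \<Rightarrow> 'a list \<Rightarrow> 'k mat" where
  "mat_on_list F xs = mat (length xs) (length xs) (\<lambda>(i, j). F (xs ! i) (xs ! j))"

lemma mat_on_list_carrier [simp]: "mat_on_list F xs \<in> carrier_mat (length xs) (length xs)"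
  by (simp add: mat_on_list_def)

lemma det_mat_on_list_eq_0_iff:
  assumes "distinct xs"
  shows "det (mat_on_list F xs) = 0 \<longleftrightarrow> singular_on (set xs) F"
proof -
  have "singular_on {..<length xs} (\<lambda>i j. mat_on_list F xs $$ (i, j))
      \<longleftrightarrow> singular_on {..<length xs} (\<lambda>i j. F (xs ! i) (xs ! j))"
    unfolding singular_on_def by (simp add: mat_on_list_def)
  also have "\<dots> \<longleftrightarrow> singular_on (set xs) F"
    by (rule singular_on_bij[OF bij_betw_nth[OF assms refl refl], symmetric]) simp
  finally show ?thesis
    by (simp add: det_eq_0_iff_singular_on[OF mat_on_list_carrier])
qed

lemma singular_on_transpose:
  assumes "finite S"
  shows "singular_on S (\<lambda>a b. F b a) \<longleftrightarrow> singular_on S F"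
proof -
  obtain xs where xs: "distinct xs" "set xs = S"
    using finite_distinct_list[OF assms] by blast
  have "mat_on_list (\<lambda>a b. F b a) xs = transpose_mat (mat_on_list F xs)"
    by (auto simp: mat_on_list_def)
  then show ?thesis
    using det_mat_on_list_eq_0_iff[OF xs(1)] det_transpose[OF mat_on_list_carrier] xs(2) by metis
qed

lemma not_singular_on_triangular:
  assumes "finite S" "poset_on S leq"
    and diag: "\<And>a. a \<in> S \<Longrightarrow> F a a \<noteq> 0"
    and triangular: "\<And>a b. a \<in> S \<Longrightarrow> b \<in> S \<Longrightarrow> \<not> leq a b \<Longrightarrow> F a b = 0"
  shows "\<not> singular_on S F"
proof
  assume "singular_on S F"
  then obtain v where v: "\<exists>b\<in>S. v b \<noteq> 0" "\<forall>a\<in>S. (\<Sum>b\<in>S. F a b * v b) = 0"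
    unfolding singular_on_def by blast
  obtain m where m: "m \<in> S" "v m \<noteq> 0" "\<forall>b\<in>S. v b \<noteq> 0 \<longrightarrow> leq m b \<longrightarrow> b = m"
    using poset_on_has_maximal[OF assms(2), of "{b\<in>S. v b \<noteq> 0}"] assms(1) v(1) by auto
  have "(\<Sum>b\<in>S - {m}. F m b * v b) = 0"
    using triangular[of m] m by (intro sum.neutral) auto
  then have "(\<Sum>b\<in>S. F m b * v b) = F m m * v m"
    using sum.remove[OF assms(1) m(1), of "\<lambda>b. F m b * v b"] by simp
  then show False
    using v(2) m diag[OF m(1)] by simp
qed

definition nle_indicator :: "('a \<Rightarrow> 'a \<Rightarrow> bool) \<Rightarrow> 'a \<Rightarrow> 'a \<Rightarrow> 'k::zero_neq_one" where
  "nle_indicator leq a b = (if leq a b then 0 else 1)"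

lemma nle_indicator_conversep: "nle_indicator leq\<inverse>\<inverse> = (\<lambda>a b. nle_indicator leq b a)"
  by (simp add: fun_eq_iff nle_indicator_def)

lemma nullity_mat_on_list_nle_indicator:
  assumes "distinct xs" "poset_on (set xs) leq"
  shows "int (length xs) - int (vec_space.rank (length xs) (mat_on_list (nle_indicator leq) xs :: real mat))
    = (if singular_on (set xs) (nle_indicator leq :: _ \<Rightarrow> _ \<Rightarrow> real) then 1 else 0)"
proof -
  define n where "n = length xs"
  define A :: "real mat" where "A = mat_on_list (nle_indicator leq) xs"
  have A: "A \<in> carrier_mat n n"
    by (simp add: A_def n_def)
  have det_A: "det A = 0 \<longleftrightarrow> singular_on (set xs) (nle_indicator leq :: _ \<Rightarrow> _ \<Rightarrow> real)"
    unfolding A_def by (rule det_mat_on_list_eq_0_iff[OF assms(1)])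
  txt \<open>\<open>A + J\<close> is minus the zeta matrix of the order, which is invertible, and \<open>J\<close> has rank 1.\<close>
  have "n \<le> vec_space.rank n A + 1"
  proof -
    define J where "J = mat n n (\<lambda>_. -1::real)"
    have J: "J \<in> carrier_mat n n"
      by (simp add: J_def)
    have "vec_space.rank n J \<le> 1"
      by (rule vec_space.rank_le_1_product_entries[OF J, of "\<lambda>_. -1" "\<lambda>_. 1"]) (simp add: J_def)
    have AJ: "A + J = mat_on_list (\<lambda>a b. if leq a b then -1 else 0) xs"
      by (rule eq_matI) (simp_all add: A_def J_def n_def mat_on_list_def nle_indicator_def)
    have "\<not> singular_on (set xs) (\<lambda>a b. if leq a b then -1 else 0 :: real)"
      by (rule not_singular_on_triangular[OF _ assms(2)]) (simp_all add: poset_on_refl[OF assms(2)])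
    then have "det (A + J) \<noteq> 0"
      unfolding AJ by (simp add: det_mat_on_list_eq_0_iff[OF assms(1)])
    then have "vec_space.rank n (A + J) = n"
      using vec_space.det_rank_iff[of "A + J" n] A J by simp
    then show ?thesis
      using vec_space.rank_subadditive[OF A J] \<open>vec_space.rank n J \<le> 1\<close> by simp
  qed
  moreover have "vec_space.rank n A \<le> n"
    using vec_space.rank_le_nc[OF A] .
  moreover have "vec_space.rank n A = n \<longleftrightarrow> det A \<noteq> 0"
    using vec_space.det_rank_iff[OF A] by simp
  ultimately show ?thesis
    using det_A unfolding A_def n_def by auto
qed

lemma sum_merge_columns:
  fixes F :: "'a \<Rightarrow> 'a \<Rightarrow> 'k::comm_ring"
  assumes "finite S" "x \<in> S" "x' \<in> S - {x}"
  shows "(\<Sum>b\<in>S. F a b * v b)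
    = (\<Sum>b\<in>S - {x}. F a b * (v(x' := v x' + v x)) b) + (F a x - F a x') * v x"
proof -
  have "(\<Sum>b\<in>S - {x}. F a b * (v(x' := v x' + v x)) b)
      = (\<Sum>b\<in>S - {x}. F a b * v b + (if b = x' then F a x' * v x else 0))"
    by (rule sum.cong) (auto simp: algebra_simps)
  also have "\<dots> = (\<Sum>b\<in>S - {x}. F a b * v b) + F a x' * v x"
    using assms by (simp add: sum.distrib)
  also have "(\<Sum>b\<in>S - {x}. F a b * v b) = (\<Sum>b\<in>S. F a b * v b) - F a x * v x"
    using sum.remove[OF assms(1,2), of "\<lambda>b. F a b * v b"] by simp
  finally show ?thesis
    by (simp add: algebra_simps)
qed

locale duplicate_column =
  fixes S :: "'a set" and F :: "'a \<Rightarrow> 'a \<Rightarrow> 'k::field" and x x' :: 'a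
  assumes finite: "finite S" and mem: "x \<in> S" "x' \<in> S" "x' \<noteq> x"
    and same_column: "\<And>a. a \<in> S - {x} \<Longrightarrow> F a x = F a x'"
    and corner: "F x x \<noteq> F x x'"
begin

lemma sum_eq:
  assumes "a \<in> S"
  shows "(\<Sum>b\<in>S. F a b * v b)
    = (\<Sum>b\<in>S - {x}. F a b * (v(x' := v x' + v x)) b) + (if a = x then (F x x - F x x') * v x else 0)"
  using sum_merge_columns[OF finite mem(1), of x' F a v] mem same_column[of a] assms by auto

lemma singular_on_imp_singular_on_diff:
  assumes "singular_on S F"
  shows "singular_on (S - {x}) F"
proof -
  obtain v where v: "\<exists>b\<in>S. v b \<noteq> 0" "\<forall>a\<in>S. (\<Sum>b\<in>S. F a b * v b) = 0"
    using assms unfolding singular_on_def by blast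
  define w where "w = v(x' := v x' + v x)"
  have w: "\<forall>a\<in>S - {x}. (\<Sum>b\<in>S - {x}. F a b * w b) = 0"
  proof
    fix a assume "a \<in> S - {x}"
    then show "(\<Sum>b\<in>S - {x}. F a b * w b) = 0"
      using v(2) sum_eq[of a v] unfolding w_def by simp
  qed
  have "\<exists>b\<in>S - {x}. w b \<noteq> 0"
  proof (rule ccontr)
    assume w0: "\<not> (\<exists>b\<in>S - {x}. w b \<noteq> 0)"
    then have "v x = 0"
      using v(2) mem(1) sum_eq[OF mem(1), of v] corner unfolding w_def by simp
    moreover from this have "v b = 0" if "b \<in> S" for b
      using w0 that unfolding w_def by (cases "b = x") (auto split: if_splits)
    ultimately show False
      using v(1) by blast
  qed
  then show ?thesis
    using w unfolding singular_on_def by blast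
qed

lemma singular_on_diff_imp_singular_on:
  assumes "singular_on (S - {x}) F"
  shows "singular_on S F"
proof -
  obtain w where w: "\<exists>b\<in>S - {x}. w b \<noteq> 0" "\<forall>a\<in>S - {x}. (\<Sum>b\<in>S - {x}. F a b * w b) = 0"
    using assms unfolding singular_on_def by blast
  txt \<open>Split \<open>w x'\<close> between \<open>x\<close> and \<open>x'\<close> so that the equation of row \<open>x\<close> holds.\<close>
  define c where "c = - (\<Sum>b\<in>S - {x}. F x b * w b) / (F x x - F x x')"
  define v where "v = w(x := c, x' := w x' - c)"
  have "v(x' := v x' + v x) = w(x := c)"
    using mem(3) by (simp add: v_def fun_eq_iff)
  then have "(\<Sum>b\<in>S - {x}. F a b * (v(x' := v x' + v x)) b) = (\<Sum>b\<in>S - {x}. F a b * w b)" for a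
    by (intro sum.cong) auto
  moreover have "v x = c"
    using mem(3) by (simp add: v_def)
  ultimately have "(\<Sum>b\<in>S. F a b * v b) = 0" if "a \<in> S" for a
    using sum_eq[OF that, of v] w(2) that corner by (cases "a = x") (simp_all add: c_def)
  moreover have "\<exists>b\<in>S. v b \<noteq> 0"
  proof -
    obtain b where b: "b \<in> S - {x}" "w b \<noteq> 0"
      using w(1) by blast
    have "v b \<noteq> 0 \<or> v x \<noteq> 0"
      using b \<open>v x = c\<close> by (cases "b = x'") (auto simp: v_def)
    then show ?thesis
      using b(1) mem(1) by blast
  qed
  ultimately show ?thesis
    unfolding singular_on_def by blast
qed

lemma singular_on_iff: "singular_on S F \<longleftrightarrow> singular_on (S - {x}) F"
  using singular_on_imp_singular_on_diff singular_on_diff_imp_singular_on by blast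

end

definition down_beat :: "'a set \<Rightarrow> ('a \<Rightarrow> 'a \<Rightarrow> bool) \<Rightarrow> 'a \<Rightarrow> 'a \<Rightarrow> bool" where
  "down_beat S leq x x' \<longleftrightarrow>
     x \<in> S \<and> x' \<in> S \<and> x' \<noteq> x \<and> leq x' x \<and> (\<forall>y\<in>S. leq y x \<and> y \<noteq> x \<longrightarrow> leq y x')"

definition beat :: "'a set \<Rightarrow> ('a \<Rightarrow> 'a \<Rightarrow> bool) \<Rightarrow> 'a \<Rightarrow> 'a \<Rightarrow> bool" where
  "beat S leq x x' \<longleftrightarrow> down_beat S leq x x' \<or> down_beat S leq\<inverse>\<inverse> x x'"

definition beat_free :: "'a set \<Rightarrow> ('a \<Rightarrow> 'a \<Rightarrow> bool) \<Rightarrow> bool" where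
  "beat_free S leq \<longleftrightarrow> (\<nexists>x x'. beat S leq x x')"

lemma beat_conversep [simp]: "beat S leq\<inverse>\<inverse> x x' \<longleftrightarrow> beat S leq x x'"
  by (auto simp: beat_def)

lemma beat_free_conversep [simp]: "beat_free S leq\<inverse>\<inverse> \<longleftrightarrow> beat_free S leq"
  by (simp add: beat_free_def)

lemma beat_mem: "beat S leq x x' \<Longrightarrow> x \<in> S"
  by (auto simp: beat_def down_beat_def)

lemma singular_on_remove_down_beat:
  assumes "finite S" "poset_on S leq" and beat: "down_beat S leq x x'"
  shows "singular_on S (nle_indicator leq :: _ \<Rightarrow> _ \<Rightarrow> 'k::field)
    \<longleftrightarrow> singular_on (S - {x}) (nle_indicator leq :: _ \<Rightarrow> _ \<Rightarrow> 'k)"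
proof (rule duplicate_column.singular_on_iff, unfold_locales)
  show "x \<in> S" "x' \<in> S" "x' \<noteq> x"
    using beat by (simp_all add: down_beat_def)
  show "nle_indicator leq a x = (nle_indicator leq a x' :: 'k)" if "a \<in> S - {x}" for a
    using beat that poset_on_trans[OF assms(2), of a x' x]
    by (auto simp: down_beat_def nle_indicator_def)
  have "leq x x" "\<not> leq x x'"
    using beat poset_on_refl[OF assms(2)] poset_on_antisym[OF assms(2), of x x']
    by (auto simp: down_beat_def)
  then show "nle_indicator leq x x \<noteq> (nle_indicator leq x x' :: 'k)"
    by (simp add: nle_indicator_def)
qed (fact assms(1))

lemma singular_on_remove_beat:
  assumes "finite S" "poset_on S leq" "beat S leq x x'"
  shows "singular_on S (nle_indicator leq :: _ \<Rightarrow> _ \<Rightarrow> 'k::field)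
    \<longleftrightarrow> singular_on (S - {x}) (nle_indicator leq :: _ \<Rightarrow> _ \<Rightarrow> 'k)"
  using assms(3) unfolding beat_def
proof
  assume "down_beat S leq\<inverse>\<inverse> x x'"
  have "singular_on S (nle_indicator leq\<inverse>\<inverse> :: _ \<Rightarrow> _ \<Rightarrow> 'k)
      \<longleftrightarrow> singular_on (S - {x}) (nle_indicator leq\<inverse>\<inverse> :: _ \<Rightarrow> _ \<Rightarrow> 'k)"
    using singular_on_remove_down_beat[OF assms(1) _ \<open>down_beat S leq\<inverse>\<inverse> x x'\<close>] assms(2) by simp
  then show ?thesis
    unfolding nle_indicator_conversep
    using singular_on_transpose[of S "nle_indicator leq :: _ \<Rightarrow> _ \<Rightarrow> 'k"]
      singular_on_transpose[of "S - {x}" "nle_indicator leq :: _ \<Rightarrow> _ \<Rightarrow> 'k"] assms(1) by simp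
qed (rule singular_on_remove_down_beat[OF assms(1,2)])

inductive beat_reduces :: "('a \<Rightarrow> 'a \<Rightarrow> bool) \<Rightarrow> 'a set \<Rightarrow> 'a set \<Rightarrow> bool" for leq where
  beat_reduces_refl: "beat_reduces leq S S"
| beat_reduces_remove: "beat S leq x x' \<Longrightarrow> beat_reduces leq (S - {x}) C \<Longrightarrow> beat_reduces leq S C"

lemma beat_reduces_to_beat_free:
  assumes "finite S"
  shows "\<exists>C. beat_reduces leq S C \<and> beat_free C leq"
  using assms
proof (induction "card S" arbitrary: S rule: less_induct)
  case less
  show ?case
  proof (cases "beat_free S leq")
    case False
    then obtain x x' where beat: "beat S leq x x'"
      by (auto simp: beat_free_def)
    have card: "card (S - {x}) < card S"
      using less.prems beat_mem[OF beat] by (rule card_Diff1_less)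
    then obtain C where "beat_reduces leq (S - {x}) C" "beat_free C leq"
      using less.hyps[OF card] less.prems by blast
    then show ?thesis
      using beat_reduces_remove[OF beat] by blast
  qed (use beat_reduces_refl in blast)
qed

lemma beat_reduces_singular_iff:
  assumes "beat_reduces leq S C" "finite S" "poset_on S leq"
  shows "singular_on C (nle_indicator leq :: _ \<Rightarrow> _ \<Rightarrow> 'k::field)
    \<longleftrightarrow> singular_on S (nle_indicator leq :: _ \<Rightarrow> _ \<Rightarrow> 'k)"
  using assms
proof (induction rule: beat_reduces.induct)
  case (beat_reduces_remove S x x' C)
  then show ?case
    using singular_on_remove_beat[of S leq x x'] poset_on_subset[of S leq "S - {x}"] by auto
qed simp

definition mono_map :: "'a set \<Rightarrow> ('a \<Rightarrow> 'a \<Rightarrow> bool) \<Rightarrow> 'b set \<Rightarrow> ('b \<Rightarrow> 'b \<Rightarrow> bool) \<Rightarrow> ('a \<Rightarrow> 'b) \<Rightarrow> bool"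
  where "mono_map S leq T leq' f \<longleftrightarrow> f ` S \<subseteq> T \<and> monotone_on S leq leq' f"

lemma mono_mapD:
  assumes "mono_map S leq T leq' f" "x \<in> S"
  shows "f x \<in> T" "y \<in> S \<Longrightarrow> leq x y \<Longrightarrow> leq' (f x) (f y)"
  using assms by (auto simp: mono_map_def monotone_onD)

lemma mono_map_comp: "mono_map S l1 T l2 f \<Longrightarrow> mono_map T l2 U l3 g \<Longrightarrow> mono_map S l1 U l3 (g \<circ> f)"
  unfolding mono_map_def by (auto intro: monotone_on_o)

lemma mono_map_inclusion: "S \<subseteq> T \<Longrightarrow> mono_map S leq T leq id"
  by (auto simp: mono_map_def monotone_on_def)

lemma mono_map_restrict: "mono_map S leq T leq' f \<Longrightarrow> S' \<subseteq> S \<Longrightarrow> mono_map S' leq T leq' f"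
  by (auto simp: mono_map_def intro: monotone_on_subset)

lemma mono_map_conversep [simp]: "mono_map S leq\<inverse>\<inverse> T leq'\<inverse>\<inverse> f \<longleftrightarrow> mono_map S leq T leq' f"
  by (auto simp: mono_map_def monotone_on_def)

definition comparable_maps ::
  "'a set \<Rightarrow> ('a \<Rightarrow> 'a \<Rightarrow> bool) \<Rightarrow> 'b set \<Rightarrow> ('b \<Rightarrow> 'b \<Rightarrow> bool) \<Rightarrow> ('a \<Rightarrow> 'b) \<Rightarrow> ('a \<Rightarrow> 'b) \<Rightarrow> bool"
  where "comparable_maps S leq T leq' f g \<longleftrightarrow> mono_map S leq T leq' f \<and> mono_map S leq T leq' g \<and>
    ((\<forall>x\<in>S. leq' (f x) (g x)) \<or> (\<forall>x\<in>S. leq' (g x) (f x)))"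

abbreviation fence ::
  "'a set \<Rightarrow> ('a \<Rightarrow> 'a \<Rightarrow> bool) \<Rightarrow> 'b set \<Rightarrow> ('b \<Rightarrow> 'b \<Rightarrow> bool) \<Rightarrow> ('a \<Rightarrow> 'b) \<Rightarrow> ('a \<Rightarrow> 'b) \<Rightarrow> bool"
  where "fence S leq T leq' \<equiv> (comparable_maps S leq T leq')\<^sup>*\<^sup>*"

lemma fence_sym: "fence S leq T leq' f g \<Longrightarrow> fence S leq T leq' g f"
proof -
  have "symp (comparable_maps S leq T leq')"
    by (rule sympI) (auto simp: comparable_maps_def)
  then show "fence S leq T leq' f g \<Longrightarrow> fence S leq T leq' g f"
    by (rule sympD[OF symp_rtranclp])
qed

lemma fence_map:
  assumes "\<And>h h'. comparable_maps S l1 T l2 h h' \<Longrightarrow> comparable_maps S' l1' T' l2' (\<Phi> h) (\<Phi> h')"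
    and "fence S l1 T l2 f g"
  shows "fence S' l1' T' l2' (\<Phi> f) (\<Phi> g)"
  using assms(2)
proof (induction rule: rtranclp_induct)
  case (step h h')
  then show ?case
    using assms(1) by (meson rtranclp.rtrancl_into_rtrancl)
qed simp

lemma fence_comp_left:
  assumes "mono_map T l2 U l3 g" "fence S l1 T l2 f f'"
  shows "fence S l1 U l3 (g \<circ> f) (g \<circ> f')"
proof (rule fence_map[OF _ assms(2)])
  fix h h' assume "comparable_maps S l1 T l2 h h'"
  then show "comparable_maps S l1 U l3 (g \<circ> h) (g \<circ> h')"
    using assms(1) unfolding comparable_maps_def
    by (auto intro: mono_map_comp dest: mono_mapD)
qed

lemma fence_comp_right:
  assumes "mono_map R l0 S l1 k" "fence S l1 T l2 f f'"
  shows "fence R l0 T l2 (f \<circ> k) (f' \<circ> k)"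
proof (rule fence_map[OF _ assms(2)])
  fix h h' assume "comparable_maps S l1 T l2 h h'"
  then show "comparable_maps R l0 T l2 (h \<circ> k) (h' \<circ> k)"
    using assms(1) unfolding comparable_maps_def
    by (auto intro: mono_map_comp dest: mono_mapD)
qed

lemma beat_free_below_id:
  assumes "finite C" "poset_on C leq" "beat_free C leq"
    and h: "mono_map C leq C leq h" and below: "\<forall>c\<in>C. leq (h c) c"
  shows "\<forall>c\<in>C. h c = c"
proof (rule ccontr)
  assume "\<not> (\<forall>c\<in>C. h c = c)"
  then obtain m where m: "m \<in> C" "h m \<noteq> m" and minimal: "\<forall>y\<in>C. h y \<noteq> y \<longrightarrow> leq y m \<longrightarrow> y = m"
    using poset_on_has_minimal[OF assms(2), of "{c\<in>C. h c \<noteq> c}"] assms(1) by auto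
  txt \<open>Everything strictly below \<open>m\<close> is fixed by \<open>h\<close>, so \<open>h m\<close> is the maximum of
    \<open>U\<^sub>m - {m}\<close>: \<open>m\<close> would be a beat point.\<close>
  have "down_beat C leq m (h m)"
    unfolding down_beat_def
  proof (intro conjI ballI impI)
    show "m \<in> C" "h m \<in> C" "h m \<noteq> m" "leq (h m) m"
      using m below mono_mapD(1)[OF h] by auto
    fix y assume "y \<in> C" "leq y m \<and> y \<noteq> m"
    then show "leq y (h m)"
      using minimal mono_mapD(2)[OF h \<open>y \<in> C\<close> m(1)] by metis
  qed
  then show False
    using assms(3) by (auto simp: beat_free_def beat_def)
qed

lemma beat_free_comparable_id:
  assumes "finite C" "poset_on C leq" "beat_free C leq"
    and "mono_map C leq C leq h" "(\<forall>c\<in>C. leq (h c) c) \<or> (\<forall>c\<in>C. leq c (h c))"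
  shows "\<forall>c\<in>C. h c = c"
  using assms(5)
proof
  assume "\<forall>c\<in>C. leq c (h c)"
  then show ?thesis
    using beat_free_below_id[of C "leq\<inverse>\<inverse>" h] assms(1-4) by simp
qed (rule beat_free_below_id[OF assms(1-4)])

lemma beat_free_fence_id:
  assumes "finite C" "poset_on C leq" "beat_free C leq" "fence C leq C leq h id"
  shows "\<forall>c\<in>C. h c = c"
  using assms(4)
proof (induction rule: converse_rtranclp_induct)
  case (step h h')
  then have "mono_map C leq C leq h" "(\<forall>c\<in>C. leq (h c) c) \<or> (\<forall>c\<in>C. leq c (h c))"
    by (auto simp: comparable_maps_def)
  then show ?case
    by (rule beat_free_comparable_id[OF assms(1-3)])
qed simp

definition deformation_retraction :: "'a set \<Rightarrow> ('a \<Rightarrow> 'a \<Rightarrow> bool) \<Rightarrow> 'a set \<Rightarrow> ('a \<Rightarrow> 'a) \<Rightarrow> bool"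
  where "deformation_retraction S leq C r \<longleftrightarrow>
    C \<subseteq> S \<and> mono_map S leq C leq r \<and> (\<forall>c\<in>C. r c = c) \<and> fence S leq S leq r id"

lemma beat_retraction:
  assumes "poset_on S leq" "beat S leq x x'"
  defines "r \<equiv> \<lambda>y. if y = x then x' else y"
  shows "mono_map S leq (S - {x}) leq r" "comparable_maps S leq S leq r id"
proof -
  have down: "mono_map S leq (S - {x}) leq r \<and> (\<forall>y\<in>S. leq (r y) y)"
    if "poset_on S leq" "down_beat S leq x x'" for leq
  proof -
    have "leq (r a) (r b)" if "a \<in> S" "b \<in> S" "leq a b" for a b
      using \<open>down_beat S leq x x'\<close> that poset_on_refl[OF \<open>poset_on S leq\<close>]
        poset_on_trans[OF \<open>poset_on S leq\<close>, of x' x b]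
      by (auto simp: r_def down_beat_def)
    moreover have "r ` S \<subseteq> S - {x}" "\<forall>y\<in>S. leq (r y) y"
      using \<open>down_beat S leq x x'\<close> poset_on_refl[OF \<open>poset_on S leq\<close>]
      by (auto simp: r_def down_beat_def)
    ultimately show ?thesis
      by (auto simp: mono_map_def monotone_on_def)
  qed
  have "mono_map S leq (S - {x}) leq r \<and> ((\<forall>y\<in>S. leq (r y) y) \<or> (\<forall>y\<in>S. leq y (r y)))"
    using assms(2) down[OF assms(1)] down[of "leq\<inverse>\<inverse>"] assms(1) by (auto simp: beat_def)
  moreover from this have "mono_map S leq S leq r"
    by (auto simp: mono_map_def)
  ultimately show "mono_map S leq (S - {x}) leq r" "comparable_maps S leq S leq r id"
    by (auto simp: comparable_maps_def mono_map_inclusion)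
qed

lemma beat_reduces_retraction:
  assumes "beat_reduces leq S C" "poset_on S leq"
  shows "\<exists>r. deformation_retraction S leq C r"
  using assms
proof (induction rule: beat_reduces.induct)
  case (beat_reduces_refl S)
  show ?case
    unfolding deformation_retraction_def
    by (intro exI[of _ id] conjI) (simp_all add: mono_map_inclusion)
next
  case (beat_reduces_remove S x x' C)
  define rx where "rx = (\<lambda>y. if y = x then x' else y)"
  note rx = beat_retraction[OF beat_reduces_remove.prems beat_reduces_remove.hyps(1), folded rx_def]
  obtain r where r: "deformation_retraction (S - {x}) leq C r"
    using beat_reduces_remove.IH beat_reduces_remove.prems poset_on_subset by blast
  have "fence S leq (S - {x}) leq (r \<circ> rx) rx"
    using fence_comp_right[OF rx(1), of "S - {x}" leq r id] r
    by (simp add: deformation_retraction_def)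
  then have "fence S leq S leq (r \<circ> rx) rx"
    using fence_comp_left[OF mono_map_inclusion[OF Diff_subset]] by fastforce
  then have "fence S leq S leq (r \<circ> rx) id"
    using rx(2) by (simp add: rtranclp.rtrancl_into_rtrancl)
  moreover have "mono_map S leq C leq (r \<circ> rx)"
    using rx(1) r by (auto simp: deformation_retraction_def intro: mono_map_comp)
  moreover have "\<forall>c\<in>C. (r \<circ> rx) c = c"
    using r by (auto simp: deformation_retraction_def rx_def)
  ultimately show ?case
    using r by (auto simp: deformation_retraction_def)
qed

lemma retraction_round_trip:
  assumes "finite S" "poset_on S l1"
    and f: "mono_map S l1 T l2 f" and g: "mono_map T l2 S l1 g" and gf: "fence S l1 S l1 (g \<circ> f) id"
    and rS: "deformation_retraction S l1 C rS" and "beat_free C l1"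
    and rT: "deformation_retraction T l2 D rT"
  shows "\<forall>c\<in>C. rS (g (rT (f c))) = c"
proof -
  have C: "C \<subseteq> S" "mono_map S l1 C l1 rS" "\<forall>c\<in>C. rS c = c"
    using rS by (simp_all add: deformation_retraction_def)
  have "fence T l2 T l2 rT id"
    using rT by (simp add: deformation_retraction_def)
  note fence_comp_left[OF g fence_comp_right[OF f this]]
  then have "fence S l1 S l1 (g \<circ> rT \<circ> f) (g \<circ> f)"
    by (simp add: comp_assoc)
  then have "fence S l1 S l1 (g \<circ> rT \<circ> f) id"
    using gf by (rule rtranclp_trans)
  then have "fence C l1 C l1 (rS \<circ> (g \<circ> rT \<circ> f) \<circ> id) (rS \<circ> id \<circ> id)"
    by (rule fence_comp_right[OF mono_map_inclusion[OF C(1)] fence_comp_left[OF C(2)]])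
  moreover have "comparable_maps C l1 C l1 rS id"
    using C assms(2) mono_map_restrict[OF C(2) C(1)]
    by (auto simp: comparable_maps_def mono_map_inclusion poset_on_refl)
  ultimately have "fence C l1 C l1 (rS \<circ> g \<circ> rT \<circ> f) id"
    by (simp add: comp_assoc rtranclp.rtrancl_into_rtrancl)
  then have "\<forall>c\<in>C. (rS \<circ> g \<circ> rT \<circ> f) c = c"
    by (rule beat_free_fence_id[OF finite_subset[OF C(1) assms(1)] poset_on_subset[OF assms(2) C(1)]
          \<open>beat_free C l1\<close>])
  then show ?thesis
    by simp
qed

lemma fence_equivalence_singular_iff:
  assumes S: "finite S" "poset_on S l1" and T: "finite T" "poset_on T l2"
    and f: "mono_map S l1 T l2 f" and g: "mono_map T l2 S l1 g"
    and gf: "fence S l1 S l1 (g \<circ> f) id" and fg: "fence T l2 T l2 (f \<circ> g) id"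
  shows "singular_on S (nle_indicator l1 :: _ \<Rightarrow> _ \<Rightarrow> 'k::field)
    \<longleftrightarrow> singular_on T (nle_indicator l2 :: _ \<Rightarrow> _ \<Rightarrow> 'k)"
proof -
  obtain C rS where C: "beat_reduces l1 S C" "beat_free C l1" "deformation_retraction S l1 C rS"
    using beat_reduces_to_beat_free[OF S(1)] beat_reduces_retraction S(2) by metis
  obtain D rT where D: "beat_reduces l2 T D" "beat_free D l2" "deformation_retraction T l2 D rT"
    using beat_reduces_to_beat_free[OF T(1)] beat_reduces_retraction T(2) by metis
  define p where "p = rT \<circ> f"
  define q where "q = rS \<circ> g"
  have rS: "C \<subseteq> S" "mono_map S l1 C l1 rS" and rT: "D \<subseteq> T" "mono_map T l2 D l2 rT"
    using C(3) D(3) by (simp_all add: deformation_retraction_def)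
  have p: "mono_map C l1 D l2 p"
    unfolding p_def by (rule mono_map_restrict[OF mono_map_comp[OF f rT(2)] rS(1)])
  have q: "mono_map D l2 C l1 q"
    unfolding q_def by (rule mono_map_restrict[OF mono_map_comp[OF g rS(2)] rT(1)])
  have qp: "\<forall>c\<in>C. q (p c) = c"
    using retraction_round_trip[OF S f g gf C(3,2) D(3)] by (simp add: p_def q_def)
  have pq: "\<forall>d\<in>D. p (q d) = d"
    using retraction_round_trip[OF T g f fg D(3,2) C(3)] by (simp add: p_def q_def)
  have "bij_betw p C D"
    using qp pq mono_mapD(1)[OF p] mono_mapD(1)[OF q] by (auto intro!: bij_betw_byWitness)
  moreover have "l2 (p a) (p b) \<longleftrightarrow> l1 a b" if "a \<in> C" "b \<in> C" for a b
    using mono_mapD[OF p] mono_mapD[OF q] qp that by metis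
  ultimately have "singular_on D (nle_indicator l2 :: _ \<Rightarrow> _ \<Rightarrow> 'k)
      \<longleftrightarrow> singular_on C (nle_indicator l1 :: _ \<Rightarrow> _ \<Rightarrow> 'k)"
    by (intro singular_on_bij) (auto simp: nle_indicator_def)
  then show ?thesis
    using beat_reduces_singular_iff[OF C(1) S, where 'k='k] beat_reduces_singular_iff[OF D(1) T, where 'k='k]
    by simp
qed

lemma minimal_open_mem: "x \<in> topspace X \<Longrightarrow> x \<in> minimal_open X x"
  by (auto simp: minimal_open_def)

lemma minimal_open_subset: "openin X U \<Longrightarrow> x \<in> U \<Longrightarrow> minimal_open X x \<subseteq> U"
  by (auto simp: minimal_open_def)

lemma openin_minimal_open:
  assumes "finite (topspace X)" "x \<in> topspace X"
  shows "openin X (minimal_open X x)"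
proof -
  have "finite {U. openin X U \<and> x \<in> U}"
    using assms(1) openin_subset by (auto intro: finite_subset[of _ "Pow (topspace X)"])
  then show ?thesis
    unfolding minimal_open_def using assms(2) by (intro openin_Inter) auto
qed

lemma poset_on_fin_leq:
  assumes "finite_T0_space X"
  shows "poset_on (topspace X) (fin_leq X)"
proof -
  have "x = y" if xy: "x \<in> topspace X" "y \<in> topspace X" "fin_leq X x y" "fin_leq X y x" for x y
  proof (rule ccontr)
    assume "x \<noteq> y"
    then obtain U where "openin X U" "x \<in> U \<longleftrightarrow> y \<notin> U"
      using assms xy(1,2) unfolding finite_T0_space_def t0_space_def by blast
    then show False
      using xy minimal_open_subset[of X U] minimal_open_mem[of _ X]
      unfolding fin_leq_def by blast
  qed
  then show ?thesis
    unfolding poset_on_def fin_leq_def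
    by (auto intro: reflp_onI antisymp_onI transp_onI)
qed

lemma continuous_map_mono_map:
  assumes "finite (topspace Y)" "continuous_map X Y f"
  shows "mono_map (topspace X) (fin_leq X) (topspace Y) (fin_leq Y) f"
  unfolding mono_map_def monotone_on_def
proof (intro conjI ballI impI)
  show "f ` topspace X \<subseteq> topspace Y"
    using assms(2) by (rule continuous_map_image_subset_topspace)
  fix x y assume xy: "x \<in> topspace X" "y \<in> topspace X" "fin_leq X x y"
  have fy: "f y \<in> topspace Y"
    using assms(2) xy(2) by (rule continuous_map_image_subset_topspace[THEN subsetD, OF _ imageI])
  have "openin X {z \<in> topspace X. f z \<in> minimal_open Y (f y)}"
    using assms(2) openin_minimal_open[OF assms(1) fy] by (rule openin_continuous_map_preimage)
  then have "minimal_open X y \<subseteq> {z \<in> topspace X. f z \<in> minimal_open Y (f y)}"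
    by (rule minimal_open_subset) (simp add: xy(2) minimal_open_mem[OF fy])
  then have "f x \<in> minimal_open Y (f y)"
    using xy(3) minimal_open_mem[OF xy(1)] unfolding fin_leq_def by blast
  then show "fin_leq Y (f x) (f y)"
    using minimal_open_subset[OF openin_minimal_open[OF assms(1) fy]] unfolding fin_leq_def by blast
qed

lemma homotopy_locally_below:
  assumes "finite (topspace X)" "finite (topspace Y)"
    and H: "continuous_map (prod_topology (top_of_set {0..1}) X) Y H" and t: "t \<in> {0..1::real}"
  shows "\<exists>U. openin (top_of_set {0..1}) U \<and> t \<in> U \<and>
    (\<forall>s\<in>U. \<forall>x\<in>topspace X. fin_leq Y (H (s, x)) (H (t, x)))"
proof -
  have Htx: "H (t, x) \<in> topspace Y" if "x \<in> topspace X" for x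
    using continuous_map_image_subset_topspace[OF H] t that by auto
  define V where "V x = {s \<in> {0..1}. H (s, x) \<in> minimal_open Y (H (t, x))}" for x
  define U where "U = (\<Inter>x\<in>topspace X. V x) \<inter> topspace (top_of_set {0..1::real})"
  have "openin (top_of_set {0..1}) (V x)" if "x \<in> topspace X" for x
  proof -
    have "continuous_map (top_of_set {0..1}) (prod_topology (top_of_set {0..1}) X) (\<lambda>s. (s, x))"
      using that by (intro continuous_map_pairedI continuous_map_id[unfolded id_def]) simp
    then have "continuous_map (top_of_set {0..1}) Y (\<lambda>s. H (s, x))"
      using continuous_map_compose[OF _ H] by (simp add: o_def)
    then show ?thesis
      unfolding V_def
      using openin_continuous_map_preimage openin_minimal_open[OF assms(2) Htx[OF that]] by fastforce
  qed
  then have "openin (top_of_set {0..1}) U"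
    unfolding U_def by (rule openin_INT[OF assms(1)])
  moreover have "t \<in> U"
    using t minimal_open_mem[OF Htx] by (auto simp: U_def V_def)
  moreover have "fin_leq Y (H (s, x)) (H (t, x))" if "s \<in> U" "x \<in> topspace X" for s x
  proof -
    have "H (s, x) \<in> minimal_open Y (H (t, x))"
      using that by (simp add: U_def V_def)
    then show ?thesis
      unfolding fin_leq_def by (rule minimal_open_subset[OF openin_minimal_open[OF assms(2) Htx[OF that(2)]]])
  qed
  ultimately show ?thesis
    by blast
qed

lemma homotopic_imp_fence:
  assumes "finite (topspace X)" "finite (topspace Y)" "homotopic_with (\<lambda>_. True) X Y p q"
  shows "fence (topspace X) (fin_leq X) (topspace Y) (fin_leq Y) p q"
proof -
  obtain H where H: "continuous_map (prod_topology (top_of_set {0..1::real}) X) Y H"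
    and H0: "\<forall>x\<in>topspace X. H (0, x) = p x" and H1: "\<forall>x\<in>topspace X. H (1, x) = q x"
    using assms(3) by (auto simp: homotopic_with)
  define h where "h t = (\<lambda>x. H (t, x))" for t
  let ?fence = "fence (topspace X) (fin_leq X) (topspace Y) (fin_leq Y)"
  have h: "mono_map (topspace X) (fin_leq X) (topspace Y) (fin_leq Y) (h t)" if "t \<in> {0..1}" for t
    unfolding h_def using continuous_map_mono_map[OF assms(2) continuous_map_o_Pair[OF H]] that
    by (simp add: o_def)
  have "?fence (h 0) (h 1)"
  proof (rule connected_equivalence_relation[of "{0..1}"])
    fix t :: real assume t: "t \<in> {0..1}"
    obtain U where U: "openin (top_of_set {0..1}) U" "t \<in> U"
      "\<forall>s\<in>U. \<forall>x\<in>topspace X. fin_leq Y (H (s, x)) (H (t, x))"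
      using homotopy_locally_below[OF assms(1,2) H t] by blast
    have "?fence (h t) (h s)" if "s \<in> U" for s
      using U(3) that h[OF t] h[of s] openin_imp_subset[OF U(1)]
      by (intro r_into_rtranclp) (auto simp: comparable_maps_def h_def)
    then show "\<exists>U. openin (top_of_set {0..1}) U \<and> t \<in> U \<and> (\<forall>s\<in>U. ?fence (h t) (h s))"
      using U(1,2) by blast
  qed (auto intro: fence_sym rtranclp_trans)
  moreover have "comparable_maps (topspace X) (fin_leq X) (topspace Y) (fin_leq Y) p (h 0)"
    "comparable_maps (topspace X) (fin_leq X) (topspace Y) (fin_leq Y) (h 1) q"
    using H0 H1 h[of 0] h[of 1] continuous_map_mono_map[OF assms(2)]
      homotopic_with_imp_continuous_maps[OF assms(3)]
    by (auto simp: comparable_maps_def h_def fin_leq_def)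
  ultimately show ?thesis
    by (meson converse_rtranclp_into_rtranclp rtranclp.rtrancl_into_rtrancl)
qed

lemma rank_bar_eq_singular_on:
  assumes "finite_T0_space X"
  shows "rank_bar X = (if singular_on (topspace X) (nle_indicator (fin_leq X) :: _ \<Rightarrow> _ \<Rightarrow> real) then 1 else 0)"
proof -
  have "finite (topspace X)"
    using assms by (simp add: finite_T0_space_def)
  then have "\<exists>xs. distinct xs \<and> set xs = topspace X"
    using finite_distinct_list by blast
  then have "distinct (labelling X) \<and> set (labelling X) = topspace X"
    unfolding labelling_def by (rule someI_ex)
  then have xs: "distinct (labelling X)" "set (labelling X) = topspace X"
    by simp_all
  then have "card (topspace X) = length (labelling X)"
    using distinct_card by metis
  moreover have "space_matrix X = mat_on_list (nle_indicator (fin_leq X)) (labelling X)"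
    by (simp add: space_matrix_def mat_on_list_def nle_indicator_def Let_def)
  ultimately show ?thesis
    unfolding rank_bar_def
    using nullity_mat_on_list_nle_indicator[OF xs(1)] poset_on_fin_leq[OF assms] xs(2) by simp
qed

theorem mainTheorem8:
  fixes X :: "'a topology" and Y :: "'b topology"
  assumes "finite_T0_space X" and "finite_T0_space Y"
    and "X homotopy_equivalent_space Y"
  shows "rank_bar X = rank_bar Y"
proof -
  obtain f g where f: "continuous_map X Y f" and g: "continuous_map Y X g"
    and gf: "homotopic_with (\<lambda>_. True) X X (g \<circ> f) id"
    and fg: "homotopic_with (\<lambda>_. True) Y Y (f \<circ> g) id"
    using assms(3) unfolding homotopy_equivalent_space_def by blast
  have fin: "finite (topspace X)" "finite (topspace Y)"
    using assms(1,2) by (simp_all add: finite_T0_space_def)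
  have "singular_on (topspace X) (nle_indicator (fin_leq X) :: _ \<Rightarrow> _ \<Rightarrow> real)
      \<longleftrightarrow> singular_on (topspace Y) (nle_indicator (fin_leq Y) :: _ \<Rightarrow> _ \<Rightarrow> real)"
    using fin(1) poset_on_fin_leq[OF assms(1)] fin(2) poset_on_fin_leq[OF assms(2)]
      continuous_map_mono_map[OF fin(2) f] continuous_map_mono_map[OF fin(1) g]
      homotopic_imp_fence[OF fin(1,1) gf] homotopic_imp_fence[OF fin(2,2) fg]
    by (rule fence_equivalence_singular_iff)
  then show ?thesis
    using rank_bar_eq_singular_on[OF assms(1)] rank_bar_eq_singular_on[OF assms(2)] by simp
qed

end
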